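(* If $n$ and $r$ are positive integers with $n\ge 2r+2$, then $$\rho_2(K(n+1,r+1))\ \ge\ \rho_2(K(n,r)).$$
   Context: For integers $n\ge 2r$, the Kneser graph $K(n,r)$ has as vertices the $r$-element subsets of $[n]=\{1,\dots,n\}$, two vertices being adjacent iff they are disjoint. A $2$-packing of a graph $G$ is a set of vertices pairwise at distance at least $3$ in $G$; $\rho_2(G)$ is the maximum cardinality of a $2$-packing. *)

theory Defs
  imports Main
begin

definition kneser_vertices :: "nat \<Rightarrow> nat \<Rightarrow> nat set set" where
  "kneser_vertices n r = {A. A \<subseteq> {1..n} \<and> card A = r}"

definition kneser_adj :: "nat \<Rightarrow> nat \<Rightarrow> nat set \<Rightarrow> nat set \<Rightarrow> bool" where
  "kneser_adj n r A B \<longleftrightarrow> A \<in> kneser_vertices n r \<and> B \<in> kneser_vertices n r \<and> A \<inter> B = {}"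

text \<open>Distance at least 3 between distinct vertices u, v: they are neither equal,
  nor adjacent, nor have a common neighbour (distance infinity counts as \<ge> 3).\<close>
definition kneser_dist_ge3 :: "nat \<Rightarrow> nat \<Rightarrow> nat set \<Rightarrow> nat set \<Rightarrow> bool" where
  "kneser_dist_ge3 n r u v \<longleftrightarrow> u \<noteq> v \<and> \<not> kneser_adj n r u v \<and>
     \<not> (\<exists>w. kneser_adj n r u w \<and> kneser_adj n r w v)"

definition kneser_2packing :: "nat \<Rightarrow> nat \<Rightarrow> nat set set \<Rightarrow> bool" where
  "kneser_2packing n r P \<longleftrightarrow> P \<subseteq> kneser_vertices n r \<and>
     (\<forall>u\<in>P. \<forall>v\<in>P. u \<noteq> v \<longrightarrow> kneser_dist_ge3 n r u v)"

definition rho2_kneser :: "nat \<Rightarrow> nat \<Rightarrow> nat" where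
  "rho2_kneser n r = Max (card ` {P. kneser_2packing n r P})"

end

theory Submission
  imports Defs
begin

text \<open>Adjoining the new point n + 1 to every r-set embeds K(n,r) into K(n+1,r+1) and maps
  2-packings to 2-packings: two lifted sets are never disjoint, and a common neighbour of two
  lifted sets avoids n + 1, so any r of its points form a common neighbour of the original sets.\<close>

lemma finite_kneser_2packings: "finite {P. kneser_2packing n r P}"
proof (rule finite_subset)
  show "{P. kneser_2packing n r P} \<subseteq> Pow (Pow {1..n})"
    by (auto simp: kneser_2packing_def kneser_vertices_def)
qed simp

lemma card_le_rho2_kneser: "kneser_2packing n r P \<Longrightarrow> card P \<le> rho2_kneser n r"
  unfolding rho2_kneser_def using finite_kneser_2packings by (intro Max_ge) auto

lemma rho2_kneser_attained: "\<exists>P. kneser_2packing n r P \<and> card P = rho2_kneser n r"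
proof -
  have "kneser_2packing n r {}"
    by (simp add: kneser_2packing_def)
  then have "rho2_kneser n r \<in> card ` {P. kneser_2packing n r P}"
    unfolding rho2_kneser_def using finite_kneser_2packings by (intro Max_in) auto
  then show ?thesis by auto
qed

lemma insert_in_kneser_vertices:
  assumes "A \<in> kneser_vertices n r"
  shows "insert (n + 1) A \<in> kneser_vertices (n + 1) (r + 1)"
proof -
  have "A \<subseteq> {1..n}" "card A = r"
    using assms by (auto simp: kneser_vertices_def)
  moreover from this have "finite A" "n + 1 \<notin> A"
    by (auto intro: finite_subset)
  ultimately show ?thesis
    by (auto simp: kneser_vertices_def)
qed

lemma inj_on_insert_kneser_vertices: "inj_on (insert (n + 1)) (kneser_vertices n r)"
proof
  fix A B assume "A \<in> kneser_vertices n r" "B \<in> kneser_vertices n r"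
    and "insert (n + 1) A = insert (n + 1) B"
  moreover have "n + 1 \<notin> C" if "C \<in> kneser_vertices n r" for C
    using that by (auto simp: kneser_vertices_def)
  ultimately show "A = B"
    by (metis insert_ident)
qed

lemma kneser_dist_ge3_insert:
  assumes A: "A \<in> kneser_vertices n r" and B: "B \<in> kneser_vertices n r"
    and dist: "kneser_dist_ge3 n r A B"
  shows "kneser_dist_ge3 (n + 1) (r + 1) (insert (n + 1) A) (insert (n + 1) B)"
  unfolding kneser_dist_ge3_def
proof (intro conjI notI)
  show "insert (n + 1) A = insert (n + 1) B \<Longrightarrow> False"
    using inj_on_insert_kneser_vertices[of n r] A B dist
    by (auto dest: inj_onD simp: kneser_dist_ge3_def)
  show "kneser_adj (n + 1) (r + 1) (insert (n + 1) A) (insert (n + 1) B) \<Longrightarrow> False"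
    by (auto simp: kneser_adj_def)
next
  assume "\<exists>w. kneser_adj (n + 1) (r + 1) (insert (n + 1) A) w
            \<and> kneser_adj (n + 1) (r + 1) w (insert (n + 1) B)"
  then obtain w where w: "w \<subseteq> {1..n + 1}" "card w = r + 1" "n + 1 \<notin> w"
      "w \<inter> A = {}" "w \<inter> B = {}"
    by (auto simp: kneser_adj_def kneser_vertices_def)
  obtain v where v: "v \<subseteq> w" "card v = r"
    using obtain_subset_with_card_n[of r w] w(2) by auto
  have "w \<subseteq> {1..n}"
    using w(1,3) by (auto simp: subset_iff le_Suc_eq)
  then have "v \<subseteq> {1..n}"
    using v(1) by blast
  then have "kneser_adj n r A v \<and> kneser_adj n r v B"
    using A B v w(4,5) by (auto simp: kneser_adj_def kneser_vertices_def)
  then show False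
    using dist by (auto simp: kneser_dist_ge3_def)
qed

lemma kneser_2packing_insert:
  assumes "kneser_2packing n r P"
  shows "kneser_2packing (n + 1) (r + 1) (insert (n + 1) ` P)"
  unfolding kneser_2packing_def
proof (intro conjI ballI impI)
  have P: "P \<subseteq> kneser_vertices n r"
    using assms by (simp add: kneser_2packing_def)
  then show "insert (n + 1) ` P \<subseteq> kneser_vertices (n + 1) (r + 1)"
    using insert_in_kneser_vertices by blast
  fix U V assume "U \<in> insert (n + 1) ` P" "V \<in> insert (n + 1) ` P" "U \<noteq> V"
  then obtain A B where AB: "A \<in> P" "B \<in> P" "A \<noteq> B"
    and UV: "U = insert (n + 1) A" "V = insert (n + 1) B"
    by blast
  have "kneser_dist_ge3 n r A B"
    using assms AB by (simp add: kneser_2packing_def)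
  with P AB show "kneser_dist_ge3 (n + 1) (r + 1) U V"
    unfolding UV by (intro kneser_dist_ge3_insert) auto
qed

lemma rho2_kneser_le_Suc_Suc: "rho2_kneser n r \<le> rho2_kneser (n + 1) (r + 1)"
proof -
  obtain P where P: "kneser_2packing n r P" and card_P: "card P = rho2_kneser n r"
    using rho2_kneser_attained by blast
  have "P \<subseteq> kneser_vertices n r"
    using P by (simp add: kneser_2packing_def)
  then have "inj_on (insert (n + 1)) P"
    by (rule inj_on_subset[OF inj_on_insert_kneser_vertices])
  then have "rho2_kneser n r = card (insert (n + 1) ` P)"
    by (simp only: card_image card_P)
  also have "\<dots> \<le> rho2_kneser (n + 1) (r + 1)"
    by (rule card_le_rho2_kneser[OF kneser_2packing_insert[OF P]])
  finally show ?thesis .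
qed

theorem theorem4p5:
  fixes n r :: nat
  assumes "0 < r" and "0 < n" and "n \<ge> 2 * r + 2"
  shows "rho2_kneser (n + 1) (r + 1) \<ge> rho2_kneser n r"
  by (rule rho2_kneser_le_Suc_Suc)

end
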